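(* For any set $X$, the free left Ehresmann monoid $\mathrm{FLE}(X)$ on $X$ can be equipped with a unary operation $*$ making it a $*$-left Ehresmann monoid (with $a^*$ the least right identity of $a$ among the projections).
   Context: A left Ehresmann monoid is a monoid with a unary operation $a\mapsto a^+$ satisfying $x^+x=x$, $(x^+y^+)^+=x^+y^+$, $x^+y^+=y^+x^+$, $(xy)^+=(xy^+)^+$; these form a variety of algebras of type $(2,1,0)$, and $\mathrm{FLE}(X)$ is the free object on $X$ in it. Its projections are $E=\{a^+\}$. A $*$-left Ehresmann monoid is a monoid with two unary operations $+,*$ such that $(M,+)$ is left Ehresmann, $M$ satisfies $xx^*=x$, $(x^* )^*=x^*$, $x^*y^*=y^*x^*$, $(xy^* )^*y^*=(xy^* )^*$, and $(x^* )^+=x^*$, $(x^+)^*=x^+$. *)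

theory Defs
  imports Main
begin

datatype 'x trm = Var 'x | One | Mul "'x trm" "'x trm" | Plus "'x trm"

text \<open>Since the
  axiom rules are stated for arbitrary terms, this is closed under substitution.\<close>
inductive leq :: "'x trm \<Rightarrow> 'x trm \<Rightarrow> bool" where
  refl: "leq t t"
| sym: "leq s t \<Longrightarrow> leq t s"
| trans: "leq s t \<Longrightarrow> leq t u \<Longrightarrow> leq s u"
| cong_mul: "leq s s' \<Longrightarrow> leq t t' \<Longrightarrow> leq (Mul s t) (Mul s' t')"
| cong_plus: "leq s s' \<Longrightarrow> leq (Plus s) (Plus s')"
| assoc: "leq (Mul (Mul x y) z) (Mul x (Mul y z))"
| lunit: "leq (Mul One x) x"
| runit: "leq (Mul x One) x"
| ax1: "leq (Mul (Plus x) x) x"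
| ax2: "leq (Plus (Mul (Plus x) (Plus y))) (Mul (Plus x) (Plus y))"
| ax3: "leq (Mul (Plus x) (Plus y)) (Mul (Plus y) (Plus x))"
| ax4: "leq (Plus (Mul x y)) (Plus (Mul x (Plus y)))"

lemma equivp_leq: "equivp leq"
  by (intro equivpI reflpI sympI transpI) (auto intro: leq.intros)

text \<open>The free left Ehresmann monoid FLE(X) on X = UNIV :: 'x set.\<close>
quotient_type 'x fle = "'x trm" / leq
  by (rule equivp_leq)

lift_definition fle_mul :: "'x fle \<Rightarrow> 'x fle \<Rightarrow> 'x fle" is Mul
  by (rule leq.cong_mul)

lift_definition fle_one :: "'x fle" is One .

lift_definition fle_plus :: "'x fle \<Rightarrow> 'x fle" is Plus
  by (rule leq.cong_plus)

lift_definition fle_gen :: "'x \<Rightarrow> 'x fle" is Var .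

definition left_ehresmann :: "('a \<Rightarrow> 'a \<Rightarrow> 'a) \<Rightarrow> 'a \<Rightarrow> ('a \<Rightarrow> 'a) \<Rightarrow> bool" where
  "left_ehresmann m e p \<longleftrightarrow>
     (\<forall>x y z. m (m x y) z = m x (m y z)) \<and> (\<forall>x. m e x = x \<and> m x e = x) \<and>
     (\<forall>x. m (p x) x = x) \<and>
     (\<forall>x y. p (m (p x) (p y)) = m (p x) (p y)) \<and>
     (\<forall>x y. m (p x) (p y) = m (p y) (p x)) \<and>
     (\<forall>x y. p (m x y) = p (m x (p y)))"

definition star_left_ehresmann ::
  "('a \<Rightarrow> 'a \<Rightarrow> 'a) \<Rightarrow> 'a \<Rightarrow> ('a \<Rightarrow> 'a) \<Rightarrow> ('a \<Rightarrow> 'a) \<Rightarrow> bool" where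
  "star_left_ehresmann m e p s \<longleftrightarrow>
     left_ehresmann m e p \<and>
     (\<forall>x. m x (s x) = x) \<and>
     (\<forall>x. s (s x) = s x) \<and>
     (\<forall>x y. m (s x) (s y) = m (s y) (s x)) \<and>
     (\<forall>x y. m (s (m x (s y))) (s y) = s (m x (s y))) \<and>
     (\<forall>x. p (s x) = s x) \<and>
     (\<forall>x. s (p x) = p x)"

text \<open>Projections E = {a^+} and the natural order e \<le> f iff e = ef on them.\<close>
definition projections :: "('a \<Rightarrow> 'a) \<Rightarrow> 'a set" where
  "projections p = range p"

definition least_right_identity_proj ::
  "('a \<Rightarrow> 'a \<Rightarrow> 'a) \<Rightarrow> ('a \<Rightarrow> 'a) \<Rightarrow> 'a \<Rightarrow> 'a \<Rightarrow> bool" where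
  "least_right_identity_proj m p a u \<longleftrightarrow>
     u \<in> projections p \<and> m a u = a \<and>
     (\<forall>f \<in> projections p. m a f = a \<longrightarrow> m u f = u)"

end

theory Submission
  imports Defs
begin

(* In any left Ehresmann monoid, a map s into the projections with x (s x) = x and
   s (x u) = (s x) u for every projection u satisfies all the *-axioms, and s x is then the
   least projection that is a right identity of x: if x f = x then (s x) f = s (x f) = s x.
   In FLE(X) such a map is read off syntactically: s t is the trailing factor of the term t
   built from 1 and +-terms only (1 if there is none).  This is well defined on FLE(X),
   since each defining identity either leaves that trailing factor alone or rewrites
   inside it. *)

lemma left_ehresmann_plus_one:
  assumes "left_ehresmann m e p"
  shows "p e = e"
  using assms unfolding left_ehresmann_def by metis

lemma left_ehresmann_plus_plus:
  assumes le: "left_ehresmann m e p"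
  shows "p (p x) = p x"
proof -
  have "p (p x) = p (m (p x) (p e))"
    using le left_ehresmann_plus_one[OF le] unfolding left_ehresmann_def by metis
  also have "\<dots> = m (p x) (p e)"
    using le unfolding left_ehresmann_def by blast
  also have "\<dots> = p x"
    using le left_ehresmann_plus_one[OF le] unfolding left_ehresmann_def by metis
  finally show ?thesis .
qed

lemma projections_iff_fixed:
  assumes "left_ehresmann m e p"
  shows "u \<in> projections p \<longleftrightarrow> p u = u"
  using left_ehresmann_plus_plus[OF assms] unfolding projections_def by (metis rangeE rangeI)

lemma projections_one:
  assumes "left_ehresmann m e p"
  shows "e \<in> projections p"
  using projections_iff_fixed[OF assms] left_ehresmann_plus_one[OF assms] by simp

lemma projections_mul:
  assumes "left_ehresmann m e p" and "u \<in> projections p" and "v \<in> projections p"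
  shows "m u v \<in> projections p"
proof -
  obtain a b where "u = p a" and "v = p b"
    using assms(2,3) unfolding projections_def by blast
  moreover have "p (m (p a) (p b)) = m (p a) (p b)"
    using assms(1) unfolding left_ehresmann_def by blast
  ultimately show ?thesis
    unfolding projections_def by (metis rangeI)
qed

lemma projections_idem:
  assumes "left_ehresmann m e p" and "u \<in> projections p"
  shows "m u u = u"
proof -
  have "p u = u"
    using assms(2) projections_iff_fixed[OF assms(1)] by blast
  moreover have "m (p u) u = u"
    using assms(1) unfolding left_ehresmann_def by blast
  ultimately show ?thesis by simp
qed

lemma projections_comm:
  assumes "left_ehresmann m e p" and "u \<in> projections p" and "v \<in> projections p"
  shows "m u v = m v u"
proof -
  obtain a b where "u = p a" and "v = p b"
    using assms(2,3) unfolding projections_def by blast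
  then show ?thesis
    using assms(1) unfolding left_ehresmann_def by blast
qed

lemma projections_right_identity_mul:
  assumes le: "left_ehresmann m e p"
    and u: "u \<in> projections p" and v: "v \<in> projections p" and "m x v = x"
  shows "m (m x u) (m v u) = m x u"
proof -
  have assoc: "m (m x y) z = m x (m y z)" for x y z
    using le unfolding left_ehresmann_def by blast
  have "m (m x u) (m v u) = m x (m (m u v) u)"
    by (simp add: assoc)
  also have "\<dots> = m (m x v) (m u u)"
    by (simp add: projections_comm[OF le u v] assoc)
  also have "\<dots> = m x u"
    using assms projections_idem[OF le u] by simp
  finally show ?thesis .
qed

definition right_projection_map ::
  "('a \<Rightarrow> 'a \<Rightarrow> 'a) \<Rightarrow> ('a \<Rightarrow> 'a) \<Rightarrow> ('a \<Rightarrow> 'a) \<Rightarrow> bool" where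
  "right_projection_map m p s \<longleftrightarrow>
     (\<forall>x. s x \<in> projections p) \<and> (\<forall>x. m x (s x) = x) \<and>
     (\<forall>x u. u \<in> projections p \<longrightarrow> s (m x u) = m (s x) u)"

lemma star_left_ehresmann_if_right_projection_map:
  assumes le: "left_ehresmann m e p" and "right_projection_map m p s"
  shows "star_left_ehresmann m e p s"
proof -
  have proj: "s x \<in> projections p" and right_id: "m x (s x) = x"
    and mul_proj: "u \<in> projections p \<Longrightarrow> s (m x u) = m (s x) u" for x u
    using assms(2) unfolding right_projection_map_def by blast+
  have assoc: "m (m x y) z = m x (m y z)" and unit: "m e x = x" for x y z
    using le unfolding left_ehresmann_def by blast+
  have "s e = e"
    using right_id[of e] unit by simp
  then have fixed: "s u = u" if "u \<in> projections p" for u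
    using mul_proj[OF that, of e] unit by simp
  have "s (m x (s y)) = m (s x) (s y)" for x y
    using mul_proj[OF proj] .
  then have "m (s (m x (s y))) (s y) = s (m x (s y))" for x y
    using assoc projections_idem[OF le proj] by simp
  moreover have "p x \<in> projections p" for x
    unfolding projections_def by simp
  ultimately show ?thesis
    unfolding star_left_ehresmann_def
    using le right_id fixed proj projections_comm[OF le proj proj] projections_iff_fixed[OF le]
    by simp
qed

lemma least_right_identity_proj_if_right_projection_map:
  assumes "right_projection_map m p s"
  shows "least_right_identity_proj m p a (s a)"
  using assms unfolding right_projection_map_def least_right_identity_proj_def by metis

fun proj_trm :: "'x trm \<Rightarrow> bool" where
  "proj_trm (Var x) = False"
| "proj_trm One = True"
| "proj_trm (Plus t) = True"
| "proj_trm (Mul t u) = (proj_trm t \<and> proj_trm u)"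

fun star_trm :: "'x trm \<Rightarrow> 'x trm" where
  "star_trm (Var x) = One"
| "star_trm One = One"
| "star_trm (Plus t) = Plus t"
| "star_trm (Mul t u) = (if proj_trm u then Mul (star_trm t) u else star_trm u)"

lemma proj_trm_leq: "leq s t \<Longrightarrow> proj_trm s = proj_trm t"
  by (induction rule: leq.induct) auto

lemma proj_trm_star_trm: "proj_trm (star_trm t)"
  by (induction t) auto

lemma leq_star_trm_self: "proj_trm t \<Longrightarrow> leq (star_trm t) t"
  by (induction t) (auto intro: leq.intros)

lemma leq_star_trm: "leq s t \<Longrightarrow> leq (star_trm s) (star_trm t)"
  by (induction rule: leq.induct)
    (auto intro: leq.intros dest: proj_trm_leq,
      metis leq.lunit leq.sym leq.trans leq_star_trm_self,
      metis leq.ax1 leq.sym leq.trans leq_star_trm_self)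

lift_definition fle_star :: "'x fle \<Rightarrow> 'x fle" is star_trm
  by (rule leq_star_trm)

lemma left_ehresmann_fle: "left_ehresmann fle_mul fle_one fle_plus"
  unfolding left_ehresmann_def by transfer (auto intro: leq.intros)

lemma fle_mul_assoc: "fle_mul (fle_mul x y) z = fle_mul x (fle_mul y z)"
  using left_ehresmann_fle unfolding left_ehresmann_def by blast

lemma proj_trm_projections: "proj_trm t \<Longrightarrow> abs_fle t \<in> projections fle_plus"
proof (induction t)
  case One
  show ?case
    using projections_one[OF left_ehresmann_fle] by (simp add: fle_one_def)
next
  case (Plus t)
  show ?case
    unfolding projections_def by (metis fle_plus.abs_eq rangeI)
next
  case (Mul t u)
  then show ?case
    using projections_mul[OF left_ehresmann_fle] by (simp flip: fle_mul.abs_eq)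
qed simp

lemma fle_star_projections: "fle_star a \<in> projections fle_plus"
  by (induction a rule: fle.abs_induct)
    (simp add: fle_star.abs_eq proj_trm_projections proj_trm_star_trm)

lemma fle_star_mul_projection:
  assumes "u \<in> projections fle_plus"
  shows "fle_star (fle_mul a u) = fle_mul (fle_star a) u"
proof -
  obtain b where u: "u = fle_plus b"
    using assms unfolding projections_def by blast
  have "fle_star (fle_mul a (fle_plus b)) = fle_mul (fle_star a) (fle_plus b)"
    by transfer (simp add: leq.refl)
  then show ?thesis
    unfolding u .
qed

lemma fle_mul_star: "fle_mul a (fle_star a) = a"
proof (induction a rule: fle.abs_induct)
  fix t :: "'x trm"
  show "fle_mul (abs_fle t) (fle_star (abs_fle t)) = abs_fle t"
  proof (induction t)
    case (Plus t)
    have "abs_fle (Plus t) \<in> projections fle_plus"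
      by (simp add: proj_trm_projections)
    then show ?case
      using projections_idem[OF left_ehresmann_fle] by (simp add: fle_star.abs_eq)
  next
    case (Mul t u)
    show ?case
    proof (cases "proj_trm u")
      case True
      then have u: "abs_fle u \<in> projections fle_plus"
        by (rule proj_trm_projections)
      show ?thesis
        using fle_star_mul_projection[OF u] projections_right_identity_mul[OF left_ehresmann_fle
            u fle_star_projections Mul.IH(1)]
        by (simp flip: fle_mul.abs_eq)
    next
      case False
      then have "fle_star (abs_fle (Mul t u)) = fle_star (abs_fle u)"
        by (simp add: fle_star.abs_eq)
      then show ?thesis
        using Mul.IH(2) by (simp add: fle_mul_assoc flip: fle_mul.abs_eq)
    qed
  qed (simp_all add: fle_star.abs_eq fle_mul.abs_eq fle.abs_eq_iff leq.runit)
qed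

lemma right_projection_map_fle_star: "right_projection_map fle_mul fle_plus fle_star"
  unfolding right_projection_map_def
  using fle_star_projections fle_mul_star fle_star_mul_projection by blast

theorem mainTheorem3:
  "\<exists>s :: 'x fle \<Rightarrow> 'x fle.
     star_left_ehresmann fle_mul fle_one fle_plus s \<and>
     (\<forall>a. least_right_identity_proj fle_mul fle_plus a (s a))"
  using star_left_ehresmann_if_right_projection_map[OF left_ehresmann_fle
      right_projection_map_fle_star]
    least_right_identity_proj_if_right_projection_map[OF right_projection_map_fle_star]
  by blast

end
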